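(* Let $p<0$ and $q\in\mathbb{R}$. Then any two elements of $\mathcal{A}_{p,q}^{-} = \{A\in S(4,\mathbb{R}) : \operatorname{Pf}(A) = p,\ \operatorname{s}(A) = q\}$ are equivalent under the action $\rho$, i.e. for any $A,B\in\mathcal{A}_{p,q}^{-}$ there is $P\in\operatorname{Sp}(4)$ with $B = P^TAP$.
   Context: $S(4,\mathbb{R})$ is the set of invertible skew-symmetric real $4\times4$ matrices; $J = \operatorname{diag}(J_0,J_0)$ with $J_0 = \begin{bmatrix} 0 & 1 \\ -1 & 0\end{bmatrix}$; $\operatorname{Sp}(4) = \{P : P^TJP = J\}$; $\rho(P,A) = P^TAP$. For $A = \begin{bmatrix} 0 & a & b & c \\ -a & 0 & d & e \\ -b & -d & 0 & f \\ -c & -e & -f & 0\end{bmatrix}$, $\operatorname{Pf}(A) = af-be+cd$ and $\operatorname{s}(A) = a+f$. *)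

theory Defs
  imports "HOL-Analysis.Analysis" "HOL-Library.Numeral_Type"
begin

(* Matrices are real^4^4; the paper's indices 1,2,3,4 correspond to the
   elements 0,1,2,3 of the numeral type 4. *)

definition skew4 :: "real^4^4 \<Rightarrow> bool" where
  "skew4 A \<longleftrightarrow> transpose A = - A"

definition S4 :: "(real^4^4) set" where
  "S4 = {A. skew4 A \<and> invertible A}"

definition Jmat :: "real^4^4" where
  "Jmat = (\<chi> i j.
     if i = 0 \<and> j = 1 then 1 else if i = 1 \<and> j = 0 then -1
     else if i = 2 \<and> j = 3 then 1 else if i = 3 \<and> j = 2 then -1 else 0)"

definition Sp4 :: "(real^4^4) set" where
  "Sp4 = {P. transpose P ** Jmat ** P = Jmat}"

definition rho :: "real^4^4 \<Rightarrow> real^4^4 \<Rightarrow> real^4^4" where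
  "rho P A = transpose P ** A ** P"

(* With A = [[0,a,b,c],[-a,0,d,e],[-b,-d,0,f],[-c,-e,-f,0]]:
   a = A12, b = A13, c = A14, d = A23, e = A24, f = A34 *)
definition Pf :: "real^4^4 \<Rightarrow> real" where
  "Pf A = A$0$1 * A$2$3 - A$0$2 * A$1$3 + A$0$3 * A$1$2"

definition s4 :: "real^4^4 \<Rightarrow> real" where
  "s4 A = A$0$1 + A$2$3"

definition Aminus :: "real \<Rightarrow> real \<Rightarrow> (real^4^4) set" where
  "Aminus p q = {A \<in> S4. Pf A = p \<and> s4 A = q}"

end

theory Submission
  imports Defs
begin

(* Since p < 0, the polynomial t^2 - q t + p has two distinct real roots l1, l2, and
   Pf (A - t J) = Pf A - t s(A) + t^2 for skew-symmetric A.  Hence A - l1 J and A - l2 J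
   have vanishing Pfaffian, so by the Pluecker relation they are decomposable, u ^ w and
   x ^ y.  Suitably rescaled they sum to J and combine to A, so (x, y, u, w) is a symplectic
   basis in which A takes the normal form diag(l1 J0, l2 J0).  All elements of the set are
   therefore congruent under Sp(4) to one and the same matrix. *)

lemma numeral_4_eq_0: "(4::4) = 0"
  by simp

lemma forall_4_from_0: "(\<forall>i::4. P i) \<longleftrightarrow> P 0 \<and> P 1 \<and> P 2 \<and> P 3"
  using forall_4[of P] unfolding numeral_4_eq_0 by auto

lemma sum_4_from_0: "sum f (UNIV::4 set) = f 0 + f 1 + f 2 + f 3"
  using sum_4[of f] unfolding numeral_4_eq_0 by (simp add: ac_simps)

definition wedge :: "'a::comm_ring_1^'n \<Rightarrow> 'a^'n \<Rightarrow> 'a^'n^'n" where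
  "wedge u w = (\<chi> k l. u$k * w$l - w$k * u$l)"

definition diag_skew :: "real \<Rightarrow> real \<Rightarrow> real^4^4" where
  "diag_skew a b = (\<chi> i j.
     if i = 0 \<and> j = 1 then a else if i = 1 \<and> j = 0 then -a
     else if i = 2 \<and> j = 3 then b else if i = 3 \<and> j = 2 then -b else 0)"

lemma Jmat_eq_diag_skew: "Jmat = diag_skew 1 1"
  by (simp add: Jmat_def diag_skew_def)

lemma skew4_iff: "skew4 M \<longleftrightarrow> (\<forall>i j. M$i$j = - M$j$i)"
  unfolding skew4_def vec_eq_iff by (auto simp: transpose_def)

lemma skew4_entry: "skew4 M \<Longrightarrow> M$i$j = - M$j$i"
  unfolding skew4_iff by blast

lemma skew4_Jmat: "skew4 Jmat"
  unfolding skew4_iff forall_4_from_0 by (simp add: Jmat_def)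

lemma skew4_diff:
  assumes "skew4 A" "skew4 B"
  shows "skew4 (A - B)"
  unfolding skew4_iff
proof (intro allI)
  fix i j
  show "(A - B)$i$j = - (A - B)$j$i"
    using skew4_entry[OF assms(1), of i j] skew4_entry[OF assms(2), of i j] by simp
qed

lemma skew4_scaleR:
  assumes "skew4 A"
  shows "skew4 (c *\<^sub>R A)"
  unfolding skew4_iff
proof (intro allI)
  fix i j
  show "(c *\<^sub>R A)$i$j = - (c *\<^sub>R A)$j$i"
    using skew4_entry[OF assms, of i j] by simp
qed

lemma Pf_scaleR: "Pf (c *\<^sub>R A) = c\<^sup>2 * Pf A"
  by (simp add: Pf_def power2_eq_square algebra_simps)

lemma Pf_diff_scaleR_Jmat: "Pf (A - l *\<^sub>R Jmat) = Pf A - l * s4 A + l\<^sup>2"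
  by (simp add: Pf_def s4_def Jmat_def power2_eq_square algebra_simps)

lemma skew4_plucker:
  assumes "skew4 M" "Pf M = 0"
  shows "M$i$j * M$k$l - M$i$k * M$j$l + M$i$l * M$j$k = 0"
proof -
  have sk: "M$i$j = - M$j$i" for i j
    using skew4_entry[OF assms(1)] .
  have diag: "M$i$i = 0" for i
    using sk[of i i] by simp
  have lower: "M$1$0 = - M$0$1" "M$2$0 = - M$0$2" "M$3$0 = - M$0$3"
    "M$2$1 = - M$1$2" "M$3$1 = - M$1$3" "M$3$2 = - M$2$3"
    by (rule sk)+
  \<comment> \<open>for distinct indices the left side is \<open>\<plusminus> Pf M\<close>, otherwise it cancels by skew-symmetry\<close>
  have "\<forall>i j k l. M$i$j * M$k$l - M$i$k * M$j$l + M$i$l * M$j$k = 0"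
    using assms(2) unfolding forall_4_from_0 Pf_def by (simp add: lower diag algebra_simps)
  then show ?thesis by blast
qed

lemma skew4_Pf_zero_decomposable:
  assumes "skew4 M" "Pf M = 0"
  shows "\<exists>u w. M = wedge u w"
proof (cases "M = 0")
  case True
  then show ?thesis
    by (intro exI[of _ 0]) (simp add: wedge_def vec_eq_iff)
next
  case False
  then obtain i j where ij: "M$i$j \<noteq> 0"
    by (auto simp: vec_eq_iff)
  have "M$k$l * M$i$j = M$k$i * M$l$j - M$k$j * M$l$i" for k l
    using skew4_plucker[OF assms, of i j k l] skew4_entry[OF assms(1), of k i]
      skew4_entry[OF assms(1), of l j] skew4_entry[OF assms(1), of k j]
      skew4_entry[OF assms(1), of l i]
    by (simp add: algebra_simps)
  then have "M = wedge (\<chi> k. M$k$i / M$i$j) (\<chi> l. M$l$j)"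
    using ij by (simp add: vec_eq_iff wedge_def field_simps)
  then show ?thesis by blast
qed

lemma rho_mult: "rho P (rho Q A) = rho (Q ** P) A"
  by (simp add: rho_def matrix_transpose_mul matrix_mul_assoc)

lemma rho_mat_1: "rho (mat 1) A = A"
  by (simp add: rho_def)

lemma Sp4_iff_rho: "P \<in> Sp4 \<longleftrightarrow> rho P Jmat = Jmat"
  by (simp add: Sp4_def rho_def)

lemma Sp4_mult: "P \<in> Sp4 \<Longrightarrow> Q \<in> Sp4 \<Longrightarrow> P ** Q \<in> Sp4"
  by (simp add: Sp4_iff_rho rho_mult[symmetric])

lemma transpose_Jmat_mult_Jmat: "transpose Jmat ** Jmat = mat 1"
  unfolding vec_eq_iff forall_4_from_0
  by (simp add: matrix_matrix_mult_def sum_4_from_0 Jmat_def mat_def transpose_def)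

lemma Sp4_right_inverse:
  assumes "P \<in> Sp4"
  shows "\<exists>P' \<in> Sp4. P ** P' = mat 1"
proof -
  define P' where "P' = transpose Jmat ** transpose P ** Jmat"
  have PJP: "transpose P ** Jmat ** P = Jmat"
    using assms by (simp add: Sp4_def)
  have "P' ** P = transpose Jmat ** (transpose P ** Jmat ** P)"
    by (simp add: P'_def matrix_mul_assoc)
  also have "\<dots> = mat 1"
    by (simp add: PJP transpose_Jmat_mult_Jmat)
  finally have inverse: "P ** P' = mat 1"
    using matrix_left_right_inverse by blast
  have "rho P' Jmat = rho P' (rho P Jmat)"
    using assms by (simp add: Sp4_iff_rho)
  also have "\<dots> = Jmat"
    by (simp add: rho_mult inverse rho_mat_1)
  finally show ?thesis
    using inverse by (auto simp: Sp4_iff_rho)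
qed

lemma rho_diag_skew:
  "rho Q (diag_skew a b) = a *\<^sub>R wedge (Q$0) (Q$1) + b *\<^sub>R wedge (Q$2) (Q$3)"
  by (simp add: vec_eq_iff rho_def matrix_matrix_mult_def sum_4_from_0 diag_skew_def
      transpose_def wedge_def algebra_simps)

lemma skew4_normal_form:
  assumes "skew4 A" "l1 \<noteq> l2" "l1 + l2 = s4 A" "l1 * l2 = Pf A"
  shows "\<exists>Q \<in> Sp4. A = rho Q (diag_skew l1 l2)"
proof -
  \<comment> \<open>\<open>Pf (A - t J)\<close> vanishes at both roots; the scaling makes \<open>M1 + M2 = J\<close> and \<open>l1 M1 + l2 M2 = A\<close>\<close>
  define c where "c = 1 / (l2 - l1)"
  define M1 where "M1 = (- c) *\<^sub>R (A - l2 *\<^sub>R Jmat)"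
  define M2 where "M2 = c *\<^sub>R (A - l1 *\<^sub>R Jmat)"
  have Pf_pencil: "Pf (A - l *\<^sub>R Jmat) = (l - l1) * (l - l2)" for l
    unfolding Pf_diff_scaleR_Jmat assms(3,4)[symmetric] by (simp add: power2_eq_square algebra_simps)
  have "skew4 M1" "skew4 M2"
    unfolding M1_def M2_def by (intro skew4_scaleR skew4_diff skew4_Jmat assms(1))+
  moreover have "Pf M1 = 0" "Pf M2 = 0"
    unfolding M1_def M2_def Pf_scaleR Pf_pencil by simp_all
  ultimately obtain x y u w where "M1 = wedge x y" "M2 = wedge u w"
    by (metis skew4_Pf_zero_decomposable)
  define Q :: "real^4^4" where
    "Q = (\<chi> k. if k = 0 then x else if k = 1 then y else if k = 2 then u else w)"
  have rho_Q: "rho Q (diag_skew a b) = a *\<^sub>R M1 + b *\<^sub>R M2" for a b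
    by (simp add: rho_diag_skew Q_def \<open>M1 = wedge x y\<close> \<open>M2 = wedge u w\<close>)
  have "c * (l2 - l1) = 1"
    using assms(2) by (simp add: c_def)
  moreover have "M1 + M2 = (c * (l2 - l1)) *\<^sub>R Jmat"
    "l1 *\<^sub>R M1 + l2 *\<^sub>R M2 = (c * (l2 - l1)) *\<^sub>R A"
    by (simp_all add: M1_def M2_def algebra_simps)
  ultimately have "M1 + M2 = Jmat" "l1 *\<^sub>R M1 + l2 *\<^sub>R M2 = A"
    by simp_all
  then have "Q \<in> Sp4" "A = rho Q (diag_skew l1 l2)"
    by (simp_all add: Sp4_iff_rho Jmat_eq_diag_skew rho_Q)
  then show ?thesis by blast
qed

lemma distinct_roots_of_negative_product:
  fixes p q :: real
  assumes "p < 0"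
  shows "\<exists>l1 l2. l1 \<noteq> l2 \<and> l1 + l2 = q \<and> l1 * l2 = p"
proof -
  define \<mu> where "\<mu> = sqrt (q\<^sup>2 - 4 * p)"
  have "q\<^sup>2 - 4 * p > 0"
    using assms zero_le_power2[of q] by linarith
  then have "\<mu> > 0" "\<mu>\<^sup>2 = q\<^sup>2 - 4 * p"
    by (simp_all add: \<mu>_def)
  then show ?thesis
    by (intro exI[of _ "(q - \<mu>) / 2"] exI[of _ "(q + \<mu>) / 2"])
      (auto simp: field_simps power2_eq_square)
qed

theorem lemma4p4:
  fixes p q :: real
  assumes "p < 0"
  shows "\<forall>A\<in>Aminus p q. \<forall>B\<in>Aminus p q. \<exists>P\<in>Sp4. B = rho P A"
proof (intro ballI)
  fix A B
  assume "A \<in> Aminus p q" "B \<in> Aminus p q"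
  then have A: "skew4 A" "Pf A = p" "s4 A = q" and B: "skew4 B" "Pf B = p" "s4 B = q"
    by (simp_all add: Aminus_def S4_def)
  obtain l1 l2 where l: "l1 \<noteq> l2" "l1 + l2 = q" "l1 * l2 = p"
    using distinct_roots_of_negative_product[OF assms] by blast
  obtain QA QB where QA: "QA \<in> Sp4" "A = rho QA (diag_skew l1 l2)"
    and QB: "QB \<in> Sp4" "B = rho QB (diag_skew l1 l2)"
    using skew4_normal_form[OF A(1) l(1)] skew4_normal_form[OF B(1) l(1)] A B l by auto
  obtain QA' where QA': "QA' \<in> Sp4" "QA ** QA' = mat 1"
    using Sp4_right_inverse[OF QA(1)] by blast
  have "rho (QA' ** QB) A = rho QB (rho (QA ** QA') (diag_skew l1 l2))"
    by (simp add: QA(2) rho_mult matrix_mul_assoc)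
  also have "\<dots> = B"
    by (simp add: QA'(2) rho_mat_1 QB(2))
  finally show "\<exists>P\<in>Sp4. B = rho P A"
    using Sp4_mult[OF QA'(1) QB(1)] by (intro bexI) auto
qed

end
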